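(* Let $n,k,d$ be integers with $1\le k\le d\le n-2$, set $s=d+1-k$, let $F$ be a finite field with $|F|\ge sn$, let $\{\lambda_{i,j}: i\in[n],\ j\in\{0,\dots,s-1\}\}$ be $sn$ distinct elements of $F$, and let $\mathcal{C}$ be the set of all $C=(C_1,\dots,C_n)$, $C_i=(c_{i,b,a}: b\in\{1,\dots,d+2-k\},\ a\in\{0,\dots,s^n-1\})$, satisfying $\sum_{i=1}^n \lambda_{i,a_i}^t c_{i,b,a}=0$ for all $t\in\{0,\dots,n-k-1\}$, $b\in\{1,\dots,d+2-k\}$, $a\in\{0,\dots,s^n-1\}$. Let $\mathcal{R}\subseteq[n]\setminus\{1,2\}$ with $|\mathcal{R}|=d$. Then for every $C\in\mathcal{C}$: (1) the values $\{c_{1,b,a}: a\in\{0,\dots,s^n-1\},\ b\in\{1,\dots,s\}\}\cup\{\sum_{j=0}^{s-2}c_{2,j+1,a(1,a_1\oplus j)}+c_{2,s,a(1,a_1\oplus(s-1))}: a\in\{0,\dots,s^n-1\}\}$ are uniquely determined by the values $\{\sum_{j=0}^{s-2}c_{i,j+1,a(1,a_1\oplus j)}+c_{i,s,a(1,a_1\oplus(s-1))}: a\in\{0,\dots,s^n-1\},\ i\in\mathcal{R}\}$; (2) the values $\{c_{2,b,a}: a\in\{0,\dots,s^n-1\},\ b\in\{1,\dots,s-1,s+1\}\}\cup\{\sum_{j=0}^{s-2}c_{1,j+1,a(2,a_2\oplus j)}+c_{1,s+1,a(2,a_2\oplus(s-1))}: a\in\{0,\dots,s^n-1\}\}$ are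 uniquely determined by the values $\{\sum_{j=0}^{s-2}c_{i,j+1,a(2,a_2\oplus j)}+c_{i,s+1,a(2,a_2\oplus(s-1))}: a\in\{0,\dots,s^n-1\},\ i\in\mathcal{R}\}$. (Here "uniquely determined" means: any two codewords of $\mathcal{C}$ that agree on the latter values agree on the former values.)
   Context: $[n]=\{1,\dots,n\}$. For $a\in\{0,\dots,s^n-1\}$, $(a_1,\dots,a_n)\in\{0,\dots,s-1\}^n$ denotes its $n$-digit $s$-ary expansion, and $a$ is identified with this tuple. For $i\in[n]$, $u\in\{0,\dots,s-1\}$, $a(i,u)$ denotes the element obtained from $a$ by replacing the $i$th digit $a_i$ by $u$; $\oplus$ denotes addition modulo $s$. Empty sums (when $s=1$) are zero. *)

theory Defs
  imports Main
begin

text \<open>The i-th digit (i in 1..n) of the n-digit s-ary expansion (a_1,...,a_n) of a,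
  with a = sum_i a_i * s^(n-i) (a_1 most significant).\<close>
definition digit :: "nat \<Rightarrow> nat \<Rightarrow> nat \<Rightarrow> nat \<Rightarrow> nat" where
  "digit s n a i = (a div s ^ (n - i)) mod s"

definition repl :: "nat \<Rightarrow> nat \<Rightarrow> nat \<Rightarrow> nat \<Rightarrow> nat \<Rightarrow> nat" where
  "repl s n a i u = a - digit s n a i * s ^ (n - i) + u * s ^ (n - i)"

definition code :: "nat \<Rightarrow> nat \<Rightarrow> nat \<Rightarrow> (nat \<Rightarrow> nat \<Rightarrow> 'a::field)
    \<Rightarrow> (nat \<Rightarrow> nat \<Rightarrow> nat \<Rightarrow> 'a) set" where
  "code n k d lam = {c. \<forall>t < n - k. \<forall>b \<in> {1..d + 2 - k}. \<forall>a < (d + 1 - k) ^ n.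
      (\<Sum>i = 1..n. lam i (digit (d + 1 - k) n a i) ^ t * c i b a) = 0}"

definition rsum :: "nat \<Rightarrow> nat \<Rightarrow> (nat \<Rightarrow> nat \<Rightarrow> nat \<Rightarrow> 'a::field) \<Rightarrow> nat \<Rightarrow> nat \<Rightarrow> nat \<Rightarrow> nat \<Rightarrow> 'a" where
  "rsum s n c l bl i a =
     (\<Sum>j < s - 1. c i (j + 1) (repl s n a l ((digit s n a l + j) mod s)))
     + c i bl (repl s n a l ((digit s n a l + (s - 1)) mod s))"

end

theory Submission
  imports Defs "HOL-Computational_Algebra.Polynomial" "HOL-Number_Theory.Cong"
begin

text \<open>
  Fix the failed position l and an address a, and let a^(j) = a(l, a_l \<oplus> j) for j < s. The
  addresses a^(j) agree with a off position l, so adding the parity checks of the s codewords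
  indexed by (b_j, a^(j)), where b_j is the column of the j-th term of the repair sum, gives n - k
  power-sum equations whose unknowns are the repair sums at a of the n - 1 positions i \<noteq> l (at the
  nodes lam i a_i) and the s entries c_{l,b_j,a^(j)} (at the nodes lam l u, u < s). These n - 1 + s
  nodes are distinct, so by Vandermonde the d repair sums of the helper set R determine the
  remaining n - 1 + s - d = n - k unknowns. Applied to the difference of two codewords, and using
  that every address is some a^(j), this yields both claims.
\<close>

lemma power_sums_eq_zero_imp_zero:
  fixes x v :: "'b \<Rightarrow> 'a::field"
  assumes fin: "finite S" and inj: "inj_on x S" and card: "card S \<le> m"
    and sums: "\<forall>t<m. (\<Sum>k\<in>S. x k ^ t * v k) = 0" and i: "i \<in> S"
  shows "v i = 0"
proof -
  \<comment> \<open>p has degree < m and vanishes at every node except x i.\<close>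
  define p where "p = (\<Prod>k\<in>S - {i}. [:- x k, 1:])"
  have "degree p \<le> sum (degree \<circ> (\<lambda>k. [:- x k, 1:])) (S - {i})"
    unfolding p_def using fin by (intro degree_prod_sum_le) auto
  also have "\<dots> < m"
    using card card_gt_0_iff[of S] i fin by auto
  finally have deg: "degree p < m" .
  have "(\<Sum>k\<in>S. poly p (x k) * v k) = (\<Sum>k\<in>S. \<Sum>t\<le>degree p. coeff p t * (x k ^ t * v k))"
    by (simp add: poly_altdef sum_distrib_right mult.assoc)
  also have "\<dots> = (\<Sum>t\<le>degree p. coeff p t * (\<Sum>k\<in>S. x k ^ t * v k))"
    by (subst sum.swap) (simp add: sum_distrib_left)
  also have "\<dots> = 0"
    using sums deg by simp
  finally have "(\<Sum>k\<in>S. poly p (x k) * v k) = 0" .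
  moreover have "poly p (x k) = 0" if "k \<in> S - {i}" for k
    unfolding p_def poly_prod using that fin by (intro prod_zero) auto
  ultimately have "poly p (x i) * v i = 0"
    using fin i by (simp add: sum.remove)
  moreover have "poly p (x i) \<noteq> 0"
    using fin inj i by (auto simp: p_def poly_prod prod_zero_iff inj_on_def)
  ultimately show ?thesis
    by simp
qed

lemma power_sums_two_blocks_eq_zero_imp_zero:
  fixes x v :: "'b \<Rightarrow> 'a::field" and y w :: "'c \<Rightarrow> 'a"
  assumes fin: "finite A" "finite B" and inj: "inj_on x A" "inj_on y B"
    and disj: "\<forall>i\<in>A. \<forall>j\<in>B. x i \<noteq> y j"
    and Z: "Z \<subseteq> A" "\<forall>i\<in>Z. v i = 0" and card: "card A + card B \<le> m + card Z"
    and sums: "\<forall>t<m. (\<Sum>i\<in>A. x i ^ t * v i) + (\<Sum>j\<in>B. y j ^ t * w j) = 0"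
  shows "(\<forall>i\<in>A. v i = 0) \<and> (\<forall>j\<in>B. w j = 0)"
proof -
  define S where "S = Inl ` (A - Z) \<union> Inr ` B"
  have fin_S: "finite S"
    using fin by (simp add: S_def)
  have sum_S: "(\<Sum>k\<in>S. case_sum x y k ^ t * case_sum v w k)
      = (\<Sum>i\<in>A - Z. x i ^ t * v i) + (\<Sum>j\<in>B. y j ^ t * w j)" for t
    unfolding S_def using fin by (subst sum.union_disjoint) (auto simp: sum.reindex)
  have "(\<Sum>i\<in>A. x i ^ t * v i) = (\<Sum>i\<in>A - Z. x i ^ t * v i)" for t
    using fin Z by (intro sum.mono_neutral_right) auto
  then have sums_S: "\<forall>t<m. (\<Sum>k\<in>S. case_sum x y k ^ t * case_sum v w k) = 0"
    using sums by (simp add: sum_S)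
  have "card S = card (A - Z) + card B"
    unfolding S_def using fin by (subst card_Un_disjoint) (auto simp: card_image)
  then have card_S: "card S \<le> m"
    using card card_mono[OF fin(1) Z(1)] Z fin by (simp add: card_Diff_subset finite_subset)
  have inj_S: "inj_on (case_sum x y) S"
  proof (rule inj_onI)
    fix k k' assume "k \<in> S" "k' \<in> S" "case_sum x y k = case_sum x y k'"
    then show "k = k'"
      using inj disj unfolding S_def by (cases k; cases k') (auto simp: inj_on_eq_iff dest: sym)
  qed
  have zero_S: "case_sum v w k = 0" if "k \<in> S" for k
    using power_sums_eq_zero_imp_zero[OF fin_S inj_S card_S sums_S that] .
  have "v i = 0" if "i \<in> A" for i
  proof (cases "i \<in> Z")
    case False
    then show ?thesis
      using zero_S[of "Inl i"] that by (simp add: S_def)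
  qed (use Z in blast)
  moreover have "w j = 0" if "j \<in> B" for j
    using zero_S[of "Inr j"] that by (simp add: S_def)
  ultimately show ?thesis
    by blast
qed

lemma digit_less: "0 < s \<Longrightarrow> digit s n a i < s"
  unfolding digit_def by simp

lemma div_mod_mult_decomp:
  fixes a p s :: nat
  shows "a = a div (p * s) * (p * s) + a div p mod s * p + a mod p"
  using div_mult_mod_eq[of a "p * s"] mod_mult2_eq[of a p s] by (simp add: ac_simps)

lemma div_mod_of_mixed_radix:
  fixes p s :: nat
  assumes "u < s" and "r < p"
  shows "(Q * (p * s) + u * p + r) div (p * s) = Q"
    and "(Q * (p * s) + u * p + r) mod p = r"
    and "(Q * (p * s) + u * p + r) div p mod s = u"
proof -
  have eq: "Q * (p * s) + u * p + r = (Q * s + u) * p + r"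
    by (simp add: algebra_simps)
  have "(Q * (p * s) + u * p + r) div p = Q * s + u"
    unfolding eq using assms by simp
  then show "(Q * (p * s) + u * p + r) div (p * s) = Q"
    and "(Q * (p * s) + u * p + r) div p mod s = u"
    using assms by (simp_all add: div_mult2_eq)
  show "(Q * (p * s) + u * p + r) mod p = r"
    unfolding eq using assms by simp
qed

lemma repl_eq:
  "repl s n a i u = a div (s ^ (n - i) * s) * (s ^ (n - i) * s) + u * s ^ (n - i) + a mod s ^ (n - i)"
proof -
  let ?p = "s ^ (n - i)"
  have "a = a div (?p * s) * (?p * s) + digit s n a i * ?p + a mod ?p"
    unfolding digit_def by (rule div_mod_mult_decomp)
  then show ?thesis
    unfolding repl_def by linarith
qed

lemma
  assumes "u < s"
  shows repl_div: "repl s n a i u div (s ^ (n - i) * s) = a div (s ^ (n - i) * s)"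
    and repl_mod: "repl s n a i u mod s ^ (n - i) = a mod s ^ (n - i)"
    and digit_repl_same: "digit s n (repl s n a i u) i = u"
  using div_mod_of_mixed_radix[OF assms, of "a mod s ^ (n - i)" "s ^ (n - i)"] assms
  unfolding repl_eq digit_def by simp_all

lemma digit_eq_if_div_mod_eq:
  assumes "0 < s" "i \<le> n" "i' \<le> n" "i' \<noteq> i"
    and div_eq: "x div (s ^ (n - i) * s) = y div (s ^ (n - i) * s)"
    and mod_eq: "x mod s ^ (n - i) = y mod s ^ (n - i)"
  shows "digit s n x i' = digit s n y i'"
proof (cases "i' < i")
  case True
  then have "n - i' = (n - i + 1) + (i - i' - 1)"
    using assms(2) by simp
  then have "s ^ (n - i') = s ^ (n - i) * s * s ^ (i - i' - 1)"
    by (simp only: power_add power_one_right)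
  then show ?thesis
    unfolding digit_def by (simp only: div_mult2_eq[of _ "s ^ (n - i) * s"] div_eq)
next
  case False
  then have "Suc (n - i') \<le> n - i"
    using assms(3,4) by simp
  then have "s ^ Suc (n - i') dvd s ^ (n - i)"
    by (rule le_imp_power_dvd)
  then have "s ^ (n - i') * s dvd s ^ (n - i)"
    by (simp only: power_Suc2)
  then have "z mod s ^ (n - i) mod (s ^ (n - i') * s) = z mod (s ^ (n - i') * s)" for z :: nat
    by (rule mod_mod_cancel)
  then have "z div s ^ (n - i') mod s = z mod s ^ (n - i) mod (s ^ (n - i') * s) div s ^ (n - i')"
    for z :: nat
    using assms(1) by (simp add: mod_mult2_eq)
  then show ?thesis
    unfolding digit_def by (simp only: mod_eq)
qed

lemma digit_repl_other:
  assumes "u < s" "i \<le> n" "i' \<le> n" "i' \<noteq> i"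
  shows "digit s n (repl s n a i u) i' = digit s n a i'"
  using assms(1)
  by (intro digit_eq_if_div_mod_eq[OF _ assms(2-4) repl_div[OF assms(1)] repl_mod[OF assms(1)]]) simp

lemma repl_repl:
  assumes "u < s"
  shows "repl s n (repl s n a i u) i v = repl s n a i v"
  unfolding repl_eq[of s n "repl s n a i u" i v] repl_div[OF assms] repl_mod[OF assms]
  by (rule repl_eq[symmetric])

lemma repl_digit: "repl s n a i (digit s n a i) = a"
  using div_mod_mult_decomp[of a "s ^ (n - i)" s] unfolding repl_eq digit_def by simp

lemma repl_less:
  assumes "u < s" "a < s ^ n" "1 \<le> i" "i \<le> n"
  shows "repl s n a i u < s ^ n"
proof -
  let ?p = "s ^ (n - i)"
  have "s ^ n = s ^ ((i - 1) + (n - i + 1))"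
    using assms(3,4) by simp
  then have pow: "s ^ n = s ^ (i - 1) * (?p * s)"
    by (simp only: power_add power_one_right)
  then have "a div (?p * s) < s ^ (i - 1)"
    using assms(2) by (simp add: less_mult_imp_div_less)
  moreover have "u * ?p + a mod ?p < ?p * s"
  proof -
    have "u * ?p + a mod ?p < (u + 1) * ?p"
      using assms(1) by simp
    also have "\<dots> \<le> s * ?p"
      using assms(1) by (intro mult_le_mono1) simp
    finally show ?thesis
      by (simp only: mult.commute)
  qed
  ultimately have "repl s n a i u < (a div (?p * s) + 1) * (?p * s)"
    unfolding repl_eq by simp
  also have "\<dots> \<le> s ^ n"
    unfolding pow using \<open>a div (?p * s) < s ^ (i - 1)\<close> by (intro mult_right_mono) auto
  finally show ?thesis .
qed

lemma inj_on_add_mod: "inj_on (\<lambda>j. ((D::nat) + j) mod s) {..<s}"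
proof (rule inj_onI)
  fix j j' assume "j \<in> {..<s}" "j' \<in> {..<s}" and "(D + j) mod s = (D + j') mod s"
  then have "[j = j'] (mod s)" "j < s" "j' < s"
    by (simp_all flip: cong_def add: cong_add_lcancel_nat)
  then show "j = j'"
    by (rule cong_less_modulus_unique_nat)
qed

definition rsum_col :: "nat \<Rightarrow> nat \<Rightarrow> nat \<Rightarrow> nat" where
  "rsum_col s bl j = (if j = s - 1 then bl else j + 1)"

lemma rsum_col_image:
  assumes "0 < s"
  shows "rsum_col s bl ` {..<s} = insert bl {1..s - 1}"
proof -
  have "{..<s} = insert (s - 1) {..<s - 1}"
    using assms by auto
  moreover have "rsum_col s bl ` {..<s - 1} = Suc ` {..<s - 1}"
    unfolding rsum_col_def by (intro image_cong) auto
  ultimately have "rsum_col s bl ` {..<s} = insert (rsum_col s bl (s - 1)) (Suc ` {..<s - 1})"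
    by (simp only: image_insert)
  then show ?thesis
    by (simp add: rsum_col_def image_Suc_lessThan)
qed

lemma rsum_eq_sum_col:
  assumes "0 < s"
  shows "rsum s n c l bl i a
    = (\<Sum>j<s. c i (rsum_col s bl j) (repl s n a l ((digit s n a l + j) mod s)))"
proof -
  have "{..<s} = insert (s - 1) {..<s - 1}"
    using assms by auto
  then show ?thesis
    unfolding rsum_def rsum_col_def by (simp add: add.commute)
qed

lemma rsum_parity_check:
  assumes c: "c \<in> code n k d lam" and s: "s = d + 1 - k" "0 < s"
    and l: "l \<in> {1..n}" and bl: "bl \<in> {1..s + 1}" and a: "a < s ^ n" and t: "t < n - k"
  shows "(\<Sum>i\<in>{1..n} - {l}. lam i (digit s n a i) ^ t * rsum s n c l bl i a)
    + (\<Sum>j<s. lam l ((digit s n a l + j) mod s) ^ t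
         * c l (rsum_col s bl j) (repl s n a l ((digit s n a l + j) mod s))) = 0"
proof -
  define u where "u j = (digit s n a l + j) mod s" for j
  define a' where "a' j = repl s n a l (u j)" for j
  define b where "b j = rsum_col s bl j" for j
  have u_less: "u j < s" for j
    using s(2) by (simp add: u_def)
  have check: "lam l (u j) ^ t * c l (b j) (a' j)
      + (\<Sum>i\<in>{1..n} - {l}. lam i (digit s n a i) ^ t * c i (b j) (a' j)) = 0" if "j < s" for j
  proof -
    have "b j \<in> {1..d + 2 - k}" "a' j < s ^ n"
      using that bl s l repl_less[OF u_less a] by (auto simp: b_def a'_def rsum_col_def)
    then have "(\<Sum>i\<in>{1..n}. lam i (digit s n (a' j) i) ^ t * c i (b j) (a' j)) = 0"
      using c t s(1) by (auto simp: code_def)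
    moreover have "digit s n (a' j) l = u j"
      by (simp add: a'_def digit_repl_same[OF u_less])
    moreover have "(\<Sum>i\<in>{1..n} - {l}. lam i (digit s n (a' j) i) ^ t * c i (b j) (a' j))
        = (\<Sum>i\<in>{1..n} - {l}. lam i (digit s n a i) ^ t * c i (b j) (a' j))"
      using l digit_repl_other[OF u_less] by (intro sum.cong) (auto simp: a'_def)
    ultimately show ?thesis
      using l by (simp add: sum.remove)
  qed
  have "(\<Sum>i\<in>{1..n} - {l}. lam i (digit s n a i) ^ t * rsum s n c l bl i a)
      = (\<Sum>j<s. \<Sum>i\<in>{1..n} - {l}. lam i (digit s n a i) ^ t * c i (b j) (a' j))"
    by (simp add: rsum_eq_sum_col[OF s(2)] sum_distrib_left sum.swap[of _ "{..<s}"] b_def a'_def u_def)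
  also have "\<dots> = (\<Sum>j<s. - (lam l (u j) ^ t * c l (b j) (a' j)))"
    using check by (intro sum.cong) (simp_all add: add_eq_0_iff)
  also have "\<dots> = - (\<Sum>j<s. lam l (u j) ^ t * c l (b j) (a' j))"
    by (rule sum_negf)
  finally show ?thesis
    by (simp add: u_def a'_def b_def)
qed

lemma repair_nodes_distinct:
  fixes lam :: "nat \<Rightarrow> nat \<Rightarrow> 'a"
  assumes inj: "inj_on (\<lambda>(i, j). lam i j) ({1..n} \<times> {0..<s})"
    and s: "0 < s" and l: "l \<in> {1..n}"
  shows "inj_on (\<lambda>i. lam i (digit s n a i)) ({1..n} - {l})"
    and "inj_on (\<lambda>j. lam l ((D + j) mod s)) {..<s}"
    and "\<forall>i\<in>{1..n} - {l}. \<forall>j\<in>{..<s}. lam i (digit s n a i) \<noteq> lam l ((D + j) mod s)"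
proof -
  have node_eq: "i = i' \<and> u = u'"
    if "i \<in> {1..n}" "i' \<in> {1..n}" "u < s" "u' < s" "lam i u = lam i' u'" for i i' u u'
    using inj_onD[OF inj, of "(i, u)" "(i', u')"] that by auto
  show "inj_on (\<lambda>i. lam i (digit s n a i)) ({1..n} - {l})"
  proof (rule inj_onI)
    fix i i' assume "i \<in> {1..n} - {l}" "i' \<in> {1..n} - {l}"
      and "lam i (digit s n a i) = lam i' (digit s n a i')"
    then show "i = i'"
      using node_eq[of i i' "digit s n a i" "digit s n a i'"] digit_less[OF s] by blast
  qed
  show "inj_on (\<lambda>j. lam l ((D + j) mod s)) {..<s}"
  proof (rule inj_onI)
    fix j j' assume j: "j \<in> {..<s}" "j' \<in> {..<s}" and "lam l ((D + j) mod s) = lam l ((D + j') mod s)"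
    then have "(D + j) mod s = (D + j') mod s"
      using node_eq[of l l "(D + j) mod s" "(D + j') mod s"] l s by simp
    then show "j = j'"
      using j by (rule inj_onD[OF inj_on_add_mod[of D s]])
  qed
  show "\<forall>i\<in>{1..n} - {l}. \<forall>j\<in>{..<s}. lam i (digit s n a i) \<noteq> lam l ((D + j) mod s)"
  proof (intro ballI notI)
    fix i j assume "i \<in> {1..n} - {l}" "j \<in> {..<s}"
      and "lam i (digit s n a i) = lam l ((D + j) mod s)"
    then show False
      using node_eq[of i l "digit s n a i" "(D + j) mod s"] l s digit_less[OF s] by simp
  qed
qed

lemma rsum_zero_on_helpers_imp_zero:
  fixes lam :: "nat \<Rightarrow> nat \<Rightarrow> 'a::field"
  assumes inj: "inj_on (\<lambda>(i, j). lam i j) ({1..n} \<times> {0..<s})"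
    and c: "c \<in> code n k d lam" and s: "s = d + 1 - k" "0 < s"
    and l: "l \<in> {1..n}" and bl: "bl \<in> {1..s + 1}" and a: "a < s ^ n"
    and R: "R \<subseteq> {1..n} - {l}" "card R = d" and zero: "\<forall>i\<in>R. rsum s n c l bl i a = 0"
  shows "(\<forall>i\<in>{1..n} - {l}. rsum s n c l bl i a = 0)
    \<and> (\<forall>j<s. c l (rsum_col s bl j) (repl s n a l ((digit s n a l + j) mod s)) = 0)"
proof -
  \<comment> \<open>The n - 1 + s unknowns exceed the n - k power sums by exactly the d values known to vanish.\<close>
  have card: "card ({1..n} - {l}) + card {..<s} \<le> (n - k) + card R"
    using l R s by simp
  have sums: "\<forall>t<n - k. (\<Sum>i\<in>{1..n} - {l}. lam i (digit s n a i) ^ t * rsum s n c l bl i a)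
      + (\<Sum>j\<in>{..<s}. lam l ((digit s n a l + j) mod s) ^ t
          * c l (rsum_col s bl j) (repl s n a l ((digit s n a l + j) mod s))) = 0"
    using rsum_parity_check[OF c s l bl a] by simp
  from power_sums_two_blocks_eq_zero_imp_zero[OF _ finite_lessThan
      repair_nodes_distinct[OF inj s(2) l] R(1) zero card sums]
  show ?thesis
    by simp
qed

lemma rsum_zero_on_helpers_imp_column_zero:
  fixes lam :: "nat \<Rightarrow> nat \<Rightarrow> 'a::field"
  assumes inj: "inj_on (\<lambda>(i, j). lam i j) ({1..n} \<times> {0..<s})"
    and c: "c \<in> code n k d lam" and s: "s = d + 1 - k" "0 < s"
    and l: "l \<in> {1..n}" and bl: "bl \<in> {1..s + 1}"
    and R: "R \<subseteq> {1..n} - {l}" "card R = d"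
    and zero: "\<forall>a<s ^ n. \<forall>i\<in>R. rsum s n c l bl i a = 0"
  shows "\<forall>a<s ^ n. \<forall>b\<in>insert bl {1..s - 1}. c l b a = 0"
proof -
  \<comment> \<open>Every address a' is the j-th shift a(l, a_l + j) of the address a = a'(l, a'_l - j).\<close>
  have "c l (rsum_col s bl j) a' = 0" if a': "a' < s ^ n" and j: "j < s" for a' j
  proof -
    define D where "D = digit s n a' l"
    define a where "a = repl s n a' l ((D + s - j) mod s)"
    have D_less: "D < s"
      using digit_less[OF s(2)] by (simp add: D_def)
    have shift_less: "(D + s - j) mod s < s"
      using s(2) by simp
    have a_less: "a < s ^ n"
      using repl_less[OF shift_less a'] l by (simp add: a_def)
    have "(digit s n a l + j) mod s = ((D + s - j) mod s + j) mod s"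
      by (simp add: a_def digit_repl_same[OF shift_less])
    also have "\<dots> = D"
      using j D_less by (simp add: mod_add_left_eq)
    finally have "(digit s n a l + j) mod s = D" .
    moreover have "repl s n a' l D = a'"
      unfolding D_def by (rule repl_digit)
    ultimately have "repl s n a l ((digit s n a l + j) mod s) = a'"
      by (simp add: a_def repl_repl[OF shift_less])
    then show ?thesis
      using rsum_zero_on_helpers_imp_zero[OF inj c s l bl a_less R] zero a_less j by auto
  qed
  then show ?thesis
    unfolding rsum_col_image[OF s(2), of bl, symmetric] by auto
qed

lemma code_diff_mem:
  assumes "c \<in> code n k d lam" "c' \<in> code n k d lam"
  shows "(\<lambda>i b a. c i b a - c' i b a) \<in> code n k d lam"
  using assms unfolding code_def by (simp add: right_diff_distrib sum_subtractf)

lemma rsum_diff: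
  "rsum s n (\<lambda>i b a. c i b a - c' i b a) l bl i a = rsum s n c l bl i a - rsum s n c' l bl i a"
  unfolding rsum_def by (simp add: sum_subtractf)

lemma code_eq_if_rsum_eq:
  fixes lam :: "nat \<Rightarrow> nat \<Rightarrow> 'a::field"
  assumes inj: "inj_on (\<lambda>(i, j). lam i j) ({1..n} \<times> {0..<s})"
    and s: "s = d + 1 - k" "0 < s" and l: "l \<in> {1..n}" and bl: "bl \<in> {1..s + 1}"
    and R: "R \<subseteq> {1..n} - {l}" "card R = d"
    and c: "c \<in> code n k d lam" and c': "c' \<in> code n k d lam"
    and agree: "\<forall>a<s ^ n. \<forall>i\<in>R. rsum s n c l bl i a = rsum s n c' l bl i a"
  shows "\<forall>a<s ^ n. \<forall>b\<in>insert bl {1..s - 1}. c l b a = c' l b a"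
    and "\<forall>a<s ^ n. \<forall>i\<in>{1..n} - {l}. rsum s n c l bl i a = rsum s n c' l bl i a"
proof -
  define e where "e = (\<lambda>i b a. c i b a - c' i b a)"
  have e: "e \<in> code n k d lam"
    unfolding e_def using c c' by (rule code_diff_mem)
  have zero: "\<forall>a<s ^ n. \<forall>i\<in>R. rsum s n e l bl i a = 0"
    using agree by (simp add: e_def rsum_diff)
  show "\<forall>a<s ^ n. \<forall>b\<in>insert bl {1..s - 1}. c l b a = c' l b a"
    using rsum_zero_on_helpers_imp_column_zero[OF inj e s l bl R zero] by (simp add: e_def)
  show "\<forall>a<s ^ n. \<forall>i\<in>{1..n} - {l}. rsum s n c l bl i a = rsum s n c' l bl i a"
    using rsum_zero_on_helpers_imp_zero[OF inj e s l bl _ R] zero by (simp add: e_def rsum_diff)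
qed

theorem mainTheorem4:
  fixes n k d s :: nat and lam :: "nat \<Rightarrow> nat \<Rightarrow> 'a::{finite,field}" and R :: "nat set"
  assumes "1 \<le> k" and "k \<le> d" and "d + 2 \<le> n"
    and s_def: "s = d + 1 - k"
    and "card (UNIV :: 'a set) \<ge> s * n"
    and "inj_on (\<lambda>(i, j). lam i j) ({1..n} \<times> {0..<s})"
    and "R \<subseteq> {1..n} - {1, 2}" and "card R = d"
  shows "(\<forall>c \<in> code n k d lam. \<forall>c' \<in> code n k d lam.
            (\<forall>a < s ^ n. \<forall>i \<in> R. rsum s n c 1 s i a = rsum s n c' 1 s i a) \<longrightarrow>
            (\<forall>a < s ^ n. \<forall>b \<in> {1..s}. c 1 b a = c' 1 b a) \<and>
            (\<forall>a < s ^ n. rsum s n c 1 s 2 a = rsum s n c' 1 s 2 a))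
       \<and> (\<forall>c \<in> code n k d lam. \<forall>c' \<in> code n k d lam.
            (\<forall>a < s ^ n. \<forall>i \<in> R. rsum s n c 2 (s + 1) i a = rsum s n c' 2 (s + 1) i a) \<longrightarrow>
            (\<forall>a < s ^ n. \<forall>b \<in> {1..s - 1} \<union> {s + 1}. c 2 b a = c' 2 b a) \<and>
            (\<forall>a < s ^ n. rsum s n c 2 (s + 1) 1 a = rsum s n c' 2 (s + 1) 1 a))"
proof -
  have s: "s = d + 1 - k" "0 < s"
    using assms(2,4) by simp_all
  have pos: "1 \<in> {1..n}" "2 \<in> {1..n}"
    using assms(3) by simp_all
  have last_col: "s \<in> {1..s + 1}" "s + 1 \<in> {1..s + 1}"
    using s(2) by simp_all
  have R: "R \<subseteq> {1..n} - {1}" "R \<subseteq> {1..n} - {2}"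
    using assms(7) by auto
  have cols: "insert s {1..s - 1} = {1..s}" "insert (s + 1) {1..s - 1} = {1..s - 1} \<union> {s + 1}"
    using s(2) by auto
  show ?thesis
  proof (intro conjI ballI impI)
    fix c c' assume "c \<in> code n k d lam" "c' \<in> code n k d lam"
      and "\<forall>a<s ^ n. \<forall>i\<in>R. rsum s n c 1 s i a = rsum s n c' 1 s i a"
    note eq = code_eq_if_rsum_eq[OF assms(6) s pos(1) last_col(1) R(1) assms(8) this]
    show "\<forall>a<s ^ n. \<forall>b\<in>{1..s}. c 1 b a = c' 1 b a"
      using eq(1) by (simp only: cols(1))
    show "\<forall>a<s ^ n. rsum s n c 1 s 2 a = rsum s n c' 1 s 2 a"
      using eq(2) pos(2) by simp
  next
    fix c c' assume "c \<in> code n k d lam" "c' \<in> code n k d lam"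
      and "\<forall>a<s ^ n. \<forall>i\<in>R. rsum s n c 2 (s + 1) i a = rsum s n c' 2 (s + 1) i a"
    note eq = code_eq_if_rsum_eq[OF assms(6) s pos(2) last_col(2) R(2) assms(8) this]
    show "\<forall>a<s ^ n. \<forall>b\<in>{1..s - 1} \<union> {s + 1}. c 2 b a = c' 2 b a"
      using eq(1) by (simp only: cols(2))
    show "\<forall>a<s ^ n. rsum s n c 2 (s + 1) 1 a = rsum s n c' 2 (s + 1) 1 a"
      using eq(2) pos(1) by simp
  qed
qed

end
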